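(* Let $X\sim N(-\mu,\sigma^2)$ with $\mu\ge0$ and $\sigma>0$. Then for every $0\le\epsilon\le1$, $$\mathbb P\Big(0\le X\le\epsilon\big(\sigma\wedge\tfrac{\sigma^2}{\mu}\big)\Big)\ge\frac{\epsilon}{5}\,\mathbb P(X\ge0),$$ with the convention $\sigma^2/0=\infty$. *)

theory Defs
  imports "HOL-Probability.Probability"
begin

definition normal_thr :: "real \<Rightarrow> real \<Rightarrow> real" where
  "normal_thr \<mu> \<sigma> = (if \<mu> = 0 then \<sigma> else min \<sigma> (\<sigma>\<^sup>2 / \<mu>))"

end

theory Submission
  imports Defs
begin

text \<open>Write \<open>t\<close> for the threshold and \<open>c\<close> for the density of \<open>X\<close> at 0. On \<open>[0,\<infinity>)\<close> the
density equals \<open>c \<cdot> exp (-(x\<^sup>2 + 2\<mu>x)/(2\<sigma>\<^sup>2))\<close>. Because \<open>t \<le> \<sigma>\<close> and \<open>\<mu>t \<le> \<sigma>\<^sup>2\<close>, the exponent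
is at most \<open>3x/(2t)\<close> on \<open>[0,t]\<close>, so there the density is at least \<open>c (1 - 3x/(4t))\<^sup>2\<close>;
integrating gives \<open>P(0 \<le> X \<le> \<epsilon>t) \<ge> c\<epsilon>t/3\<close>. Because \<open>\<sigma>\<^sup>2 \<le> t(\<mu> + \<sigma>)\<close>, the density is dominated
by \<open>c exp (1/2) exp (-x/t)\<close>, so \<open>P(X \<ge> 0) \<le> c exp (1/2) t\<close>. The theorem follows from
\<open>exp (1/2) \<le> 5/3\<close>.\<close>

lemma exp_half_le: "exp (1/2::real) \<le> 5/3"
proof -
  have "exp (1/2::real) ^ 2 = exp 1"
    by (simp add: exp_double[symmetric])
  also have "\<dots> \<le> (5/3) ^ 2"
    using e_less_272 by (simp add: power2_eq_square)
  finally show ?thesis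
    by (rule power2_le_imp_le) simp
qed

lemma one_minus_half_squared_le_exp:
  fixes y :: real
  assumes "0 \<le> y" "y \<le> 2"
  shows "(1 - y/2)^2 \<le> exp (- y)"
proof -
  have "(1 - y/2)^2 \<le> exp (- y/2)^2"
    using assms exp_ge_add_one_self[of "- y/2"] by (intro power_mono) auto
  also have "\<dots> = exp (- y)"
    by (simp add: exp_double[symmetric])
  finally show ?thesis .
qed

lemma has_integral_one_minus_mult_squared:
  fixes a s :: real
  assumes "0 \<le> s"
  shows "((\<lambda>x. (1 - a*x)^2) has_integral (s - a * s^2 + a^2 * s^3 / 3)) {0..s}"
proof -
  define F where "F x = x - a*x^2 + a^2*x^3/3" for x :: real
  have "((\<lambda>x. (1 - a*x)^2) has_integral (F s - F 0)) {0..s}"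
  proof (rule fundamental_theorem_of_calculus[OF assms])
    fix x assume "x \<in> {0..s}"
    have "(F has_real_derivative (1 - a*x)^2) (at x within {0..s})"
      unfolding F_def
      by (auto intro!: derivative_eq_intros simp: power2_eq_square field_simps)
    then show "(F has_vector_derivative (1 - a*x)^2) (at x within {0..s})"
      by (simp add: has_real_derivative_iff_has_vector_derivative)
  qed
  then show ?thesis
    by (simp add: F_def)
qed

lemma normal_thr_pos: "\<sigma> > 0 \<Longrightarrow> \<mu> \<ge> 0 \<Longrightarrow> normal_thr \<mu> \<sigma> > 0"
  by (simp add: normal_thr_def)

lemma normal_thr_le: "normal_thr \<mu> \<sigma> \<le> \<sigma>"
  by (simp add: normal_thr_def)

lemma mult_normal_thr_le: "\<mu> \<ge> 0 \<Longrightarrow> \<mu> * normal_thr \<mu> \<sigma> \<le> \<sigma>^2"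
  by (auto simp: normal_thr_def min_def field_simps)

lemma square_le_normal_thr_mult:
  assumes "\<sigma> > 0" "\<mu> \<ge> 0"
  shows "\<sigma>^2 \<le> normal_thr \<mu> \<sigma> * (\<mu> + \<sigma>)"
  using assms
  by (auto simp: normal_thr_def min_def field_simps power2_eq_square)

lemma normal_density_eq_at_0_mult_exp:
  assumes "\<sigma> > 0"
  shows "normal_density (- \<mu>) \<sigma> x
           = normal_density (- \<mu>) \<sigma> 0 * exp (- (x^2 + 2*\<mu>*x) / (2*\<sigma>^2))"
  unfolding normal_density_def using assms
  by (simp add: exp_add[symmetric] power2_eq_square field_simps)

lemma normal_density_le_exponential_density:
  assumes "\<sigma> > 0" "t > 0" "\<sigma>^2 \<le> t * (\<mu> + \<sigma>)" "x \<ge> 0"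
  shows "normal_density (- \<mu>) \<sigma> x
           \<le> normal_density (- \<mu>) \<sigma> 0 * exp (1/2) * t * exponential_density (1/t) x"
proof -
  have "\<sigma>^2 / t \<le> \<mu> + \<sigma>"
    using assms by (simp add: divide_le_eq algebra_simps)
  then have "2*x * (\<sigma>^2 / t) \<le> 2*x * (\<mu> + \<sigma>)"
    using assms by (intro mult_left_mono) auto
  moreover have "2*x*\<sigma> \<le> x^2 + \<sigma>^2"
    using zero_le_power2[of "x - \<sigma>"] by (simp add: power2_diff)
  ultimately have "- (x^2 + 2*\<mu>*x) \<le> \<sigma>^2 - 2*x * (\<sigma>^2 / t)"
    by (simp add: algebra_simps)
  then have "- (x^2 + 2*\<mu>*x) / (2*\<sigma>^2) \<le> 1/2 - x/t"
    using assms by (simp add: field_simps)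
  then have "normal_density (- \<mu>) \<sigma> x \<le> normal_density (- \<mu>) \<sigma> 0 * exp (1/2 - x/t)"
    using assms normal_density_nonneg[of "- \<mu>" \<sigma> 0]
    by (subst normal_density_eq_at_0_mult_exp) (auto intro: mult_left_mono)
  also have "\<dots> = normal_density (- \<mu>) \<sigma> 0 * exp (1/2) * t * exponential_density (1/t) x"
    unfolding exp_diff using assms by (simp add: exponential_density_def exp_minus field_simps)
  finally show ?thesis .
qed

lemma normal_density_ge_squared:
  assumes "\<sigma> > 0" "\<mu> \<ge> 0" "t > 0" "t \<le> \<sigma>" "\<mu> * t \<le> \<sigma>^2" "0 \<le> x" "x \<le> t"
  shows "normal_density (- \<mu>) \<sigma> 0 * (1 - 3*x/(4*t))^2 \<le> normal_density (- \<mu>) \<sigma> x"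
proof -
  define q where "q = (x^2 + 2*\<mu>*x) / (2*\<sigma>^2)"
  have "x * t \<le> \<sigma> * \<sigma>"
    using assms by (intro mult_mono) auto
  then have "x * x * t \<le> x * \<sigma>^2"
    using assms by (simp add: mult.assoc power2_eq_square mult_left_mono)
  moreover have "x * \<mu> * t \<le> x * \<sigma>^2"
    using assms by (simp add: mult.assoc mult_left_mono)
  moreover have "q * (2*\<sigma>^2*t) = x * x * t + 2 * (x * \<mu> * t)"
    using assms by (simp add: q_def field_simps power2_eq_square)
  ultimately have "q * (2*\<sigma>^2*t) \<le> 3*x*\<sigma>^2"
    by linarith
  then have q_le: "q \<le> 3*x/(2*t)"
    using assms by (simp add: field_simps power2_eq_square)
  have "(1 - 3*x/(4*t))^2 \<le> (1 - q/2)^2"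
    using assms q_le by (intro power_mono) (auto simp: field_simps)
  also have "\<dots> \<le> exp (- q)"
  proof (rule one_minus_half_squared_le_exp)
    show "0 \<le> q"
      using assms by (simp add: q_def)
    have "3*x/(2*t) \<le> 3/2"
      using assms by (simp add: field_simps)
    then show "q \<le> 2"
      using q_le by linarith
  qed
  finally show ?thesis
    using mult_left_mono[OF _ normal_density_nonneg[of "- \<mu>" \<sigma> 0]]
      normal_density_eq_at_0_mult_exp[OF assms(1), of \<mu> x]
    by (simp add: q_def minus_divide_left)
qed

lemma normal_prob_nonneg_le:
  assumes "prob_space M" "distributed M lborel X (normal_density (- \<mu>) \<sigma>)"
    and "\<sigma> > 0" "t > 0" "\<sigma>^2 \<le> t * (\<mu> + \<sigma>)"
  shows "measure M {x \<in> space M. X x \<ge> 0} \<le> normal_density (- \<mu>) \<sigma> 0 * exp (1/2) * t"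
proof -
  interpret prob_space M by fact
  define C where "C = normal_density (- \<mu>) \<sigma> 0 * exp (1/2) * t"
  have "emeasure M (X -` {0..} \<inter> space M)
          = (\<integral>\<^sup>+x. ennreal (normal_density (- \<mu>) \<sigma> x) * indicator {0..} x \<partial>lborel)"
    using distributed_emeasure[OF assms(2)] by simp
  also have "\<dots> \<le> (\<integral>\<^sup>+x. ennreal C * ennreal (exponential_density (1/t) x) \<partial>lborel)"
    using normal_density_le_exponential_density[OF assms(3-5)] assms(4)
    by (intro nn_integral_mono)
       (auto simp: C_def indicator_def ennreal_mult[symmetric] intro!: ennreal_leI)
  also have "\<dots> = ennreal C * (\<integral>\<^sup>+x. ennreal (exponential_density (1/t) x) \<partial>lborel)"
    by (intro nn_integral_cmult) measurable
  also have "\<dots> = ennreal C"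
    using nn_integral_erlang_ith_moment[of "1/t" 0 0] assms(4) by simp
  finally have "ennreal (measure M (X -` {0..} \<inter> space M)) \<le> ennreal C"
    by (simp add: emeasure_eq_measure)
  moreover have "C \<ge> 0"
    using assms(4) by (simp add: C_def)
  ultimately show ?thesis
    by (simp add: C_def vimage_def Int_def conj_commute)
qed

lemma normal_prob_interval_ge:
  assumes "prob_space M" "distributed M lborel X (normal_density (- \<mu>) \<sigma>)"
    and "\<sigma> > 0" "\<mu> \<ge> 0" "t > 0" "t \<le> \<sigma>" "\<mu> * t \<le> \<sigma>^2" "0 \<le> \<epsilon>" "\<epsilon> \<le> 1"
  shows "normal_density (- \<mu>) \<sigma> 0 * \<epsilon> * t * (1 - 3*\<epsilon>/4 + 3*\<epsilon>^2/16)
           \<le> measure M {x \<in> space M. 0 \<le> X x \<and> X x \<le> \<epsilon> * t}"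
proof -
  interpret prob_space M by fact
  define c where "c = normal_density (- \<mu>) \<sigma> 0"
  define a where "a = 3/(4*t)"
  have s_le: "\<epsilon> * t \<le> t"
    using assms by (simp add: mult_le_cancel_right1)
  have c_nonneg: "c \<ge> 0"
    by (simp add: c_def)
  have "((\<lambda>x. c * (1 - a*x)^2) has_integral
          c * (\<epsilon>*t - a*(\<epsilon>*t)^2 + a^2*(\<epsilon>*t)^3/3)) {0..\<epsilon>*t}"
    using has_integral_one_minus_mult_squared[of "\<epsilon>*t" a] assms
    by (intro has_integral_mult_right) simp
  moreover have "c * (\<epsilon>*t - a*(\<epsilon>*t)^2 + a^2*(\<epsilon>*t)^3/3)
                   = c * \<epsilon> * t * (1 - 3*\<epsilon>/4 + 3*\<epsilon>^2/16)"
    using assms by (simp add: a_def field_simps power2_eq_square power3_eq_cube)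
  ultimately have integral: "((\<lambda>x. c * (1 - a*x)^2) has_integral
                     c * \<epsilon> * t * (1 - 3*\<epsilon>/4 + 3*\<epsilon>^2/16)) {0..\<epsilon>*t}"
    by simp
  have "ennreal (c * \<epsilon> * t * (1 - 3*\<epsilon>/4 + 3*\<epsilon>^2/16))
               = (\<integral>\<^sup>+x. ennreal (c * (1 - a*x)^2) * indicator {0..\<epsilon>*t} x \<partial>lborel)"
    using nn_integral_has_integral_lebesgue'[OF _ integral] c_nonneg by simp
  also have "\<dots> \<le> (\<integral>\<^sup>+x. ennreal (normal_density (- \<mu>) \<sigma> x) * indicator {0..\<epsilon>*t} x \<partial>lborel)"
    using normal_density_ge_squared[OF assms(3-7)] s_le
    by (intro nn_integral_mono)
       (auto simp: indicator_def a_def c_def field_simps intro!: ennreal_leI)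
  also have "\<dots> = emeasure M (X -` {0..\<epsilon>*t} \<inter> space M)"
    using distributed_emeasure[OF assms(2)] by simp
  finally show ?thesis
    by (simp add: c_def emeasure_eq_measure vimage_def Int_def conj_commute)
qed

theorem claim3p3:
  fixes M :: "'a measure" and X :: "'a \<Rightarrow> real" and \<mu> \<sigma> \<epsilon> :: real
  assumes "prob_space M"
    and "distributed M lborel X (normal_density (- \<mu>) \<sigma>)"
    and "\<mu> \<ge> 0" and "\<sigma> > 0"
    and "0 \<le> \<epsilon>" and "\<epsilon> \<le> 1"
  shows "measure M {x \<in> space M. 0 \<le> X x \<and> X x \<le> \<epsilon> * normal_thr \<mu> \<sigma>}
           \<ge> \<epsilon> / 5 * measure M {x \<in> space M. X x \<ge> 0}"
proof -
  define t where "t = normal_thr \<mu> \<sigma>"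
  define c where "c = normal_density (- \<mu>) \<sigma> 0"
  have t_pos: "t > 0"
    using assms normal_thr_pos by (simp add: t_def)
  have c_nonneg: "c \<ge> 0"
    by (simp add: c_def)
  have t_le: "t \<le> \<sigma>" and mult_t_le: "\<mu> * t \<le> \<sigma>^2"
    using normal_thr_le mult_normal_thr_le assms by (simp_all add: t_def)
  have "\<epsilon> / 5 * measure M {x \<in> space M. X x \<ge> 0} \<le> \<epsilon> / 5 * (c * exp (1/2) * t)"
    using normal_prob_nonneg_le[OF assms(1,2,4) t_pos] square_le_normal_thr_mult assms
    by (intro mult_left_mono) (auto simp: t_def c_def)
  also have "\<dots> \<le> c * \<epsilon> * t * (1/3)"
    using exp_half_le assms c_nonneg t_pos
    by (simp add: mult_left_mono mult_ac)
  also have "\<dots> \<le> c * \<epsilon> * t * (1 - 3*\<epsilon>/4 + 3*\<epsilon>^2/16)"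
    \<comment> \<open>\<open>1 - 3\<epsilon>/4 + 3\<epsilon>\<^sup>2/16 - 1/3 = (4 - 3\<epsilon>)(8 - 3\<epsilon>)/48\<close>\<close>
    using assms c_nonneg t_pos mult_nonneg_nonneg[of "4 - 3*\<epsilon>" "8 - 3*\<epsilon>"]
    by (intro mult_left_mono) (auto simp: power2_eq_square algebra_simps)
  also have "\<dots> \<le> measure M {x \<in> space M. 0 \<le> X x \<and> X x \<le> \<epsilon> * t}"
    using normal_prob_interval_ge[OF assms(1,2,4,3) t_pos t_le mult_t_le] assms
    by (simp add: t_def c_def)
  finally show ?thesis
    by (simp add: t_def)
qed

end
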